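(* In the standing setting below, for every $(S_1,S_2)\in\Sigma(\Lambda_1,\Lambda_2)$ the function $G_1S_1$ belongs to $\mathcal{P}W_\pi+z\mathcal{P}W_\pi$.
   Context: $\mathcal{P}W_\pi$ is the Paley–Wiener space of entire functions of exponential type at most $\pi$ square integrable on $\mathbb R$; $K_\lambda(z)=\frac{\sin\pi(z-\bar\lambda)}{\pi(z-\bar\lambda)}$ is its reproducing kernel; $F^*(z)=\overline{F(\bar z)}$. Standing setting: $\Lambda\subset\mathbb C$ with $\Lambda\cap\mathbb Z=\emptyset$ is such that $\{K_\lambda\}_{\lambda\in\Lambda}$ is exact (complete and minimal) in $\mathcal PW_\pi$, and $G$ is its generating function (entire of exponential type $\pi$, simple zeros exactly at $\Lambda$, with biorthogonal system $g_\lambda=\frac{G(z)}{G'(\lambda)(z-\lambda)}$). $\Lambda=\Lambda_1\cup\Lambda_2$ is a partition into two disjoint infinite sets. $G_2$ is an entire function of genus at most 1 with simple zeros exactly at $\Lambda_2$, normalized (by an exponential factor $e^{\gamma z}$) so that $G_2^*/G_2$ restricted to $\mathbb C_+$ is a quotient of two Blaschke products, and $G_1=G/G_2$. $\Sigma(\Lambda_1,\Lambda_2)$ is the set of pairs $(S_1,S_2)$ of entire functions for which there exists $(a_n)_{n\in\mathbb Z}\in\ell^2$ with $a_n\ne0$ for all $n$ such that $$\sum_{n\in\mathbb Z}\frac{a_nG(n)}{z-n}=\frac{G_1(z)S_1(z)}{\sin\pi z},\qquad \sum_{n\in\mathbb Z}\frac{\overline{a_n}(-1)^n}{z-n}=\frac{G_2(z)S_2(z)}{\sin\pi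 z}.$$ (Such pairs correspond to the functions $h=G_2S_2=\sum_n\overline{a_n}K_n$ orthogonal to $\{g_\lambda\}_{\lambda\in\Lambda_1}\cup\{K_\lambda\}_{\lambda\in\Lambda_2}$.) *)

theory Defs
  imports "HOL-Analysis.Analysis"
begin

definition entire :: "(complex \<Rightarrow> complex) \<Rightarrow> bool" where
  "entire f \<longleftrightarrow> f holomorphic_on UNIV"

definition exp_type_le :: "real \<Rightarrow> (complex \<Rightarrow> complex) \<Rightarrow> bool" where
  "exp_type_le \<tau> f \<longleftrightarrow>
     (\<forall>\<epsilon>>0. \<exists>C. \<forall>z. norm (f z) \<le> C * exp ((\<tau> + \<epsilon>) * norm z))"

definition exp_type_eq :: "real \<Rightarrow> (complex \<Rightarrow> complex) \<Rightarrow> bool" where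
  "exp_type_eq \<tau> f \<longleftrightarrow> exp_type_le \<tau> f \<and> (\<forall>\<sigma><\<tau>. \<not> exp_type_le \<sigma> f)"

definition PW :: "(complex \<Rightarrow> complex) set" where
  "PW = {f. entire f \<and> exp_type_le pi f \<and>
            integrable lborel (\<lambda>x::real. (norm (f (complex_of_real x)))\<^sup>2)}"

definition pw_inner :: "(complex \<Rightarrow> complex) \<Rightarrow> (complex \<Rightarrow> complex) \<Rightarrow> complex" where
  "pw_inner f g = integral\<^sup>L lborel (\<lambda>x::real. f (complex_of_real x) * cnj (g (complex_of_real x)))"

definition pw_norm :: "(complex \<Rightarrow> complex) \<Rightarrow> real" where
  "pw_norm f = sqrt (integral\<^sup>L lborel (\<lambda>x::real. (norm (f (complex_of_real x)))\<^sup>2))"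

definition PW_plus_zPW :: "(complex \<Rightarrow> complex) set" where
  "PW_plus_zPW = {f. \<exists>u v. u \<in> PW \<and> v \<in> PW \<and> (\<forall>z. f z = u z + z * v z)}"

definition sinc_c :: "complex \<Rightarrow> complex" where
  "sinc_c w = (if w = 0 then 1 else sin w / w)"

definition Kern :: "complex \<Rightarrow> complex \<Rightarrow> complex" where
  "Kern lam z = sinc_c (complex_of_real pi * (z - cnj lam))"

definition in_closed_span :: "complex set \<Rightarrow> (complex \<Rightarrow> complex) \<Rightarrow> bool" where
  "in_closed_span S f \<longleftrightarrow>
     (\<forall>\<epsilon>>0. \<exists>F c. finite F \<and> F \<subseteq> S \<and>
        pw_norm (\<lambda>z. f z - (\<Sum>\<mu>\<in>F. c \<mu> * Kern \<mu> z)) < \<epsilon>)"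

definition kernels_complete :: "complex set \<Rightarrow> bool" where
  "kernels_complete \<Lambda> \<longleftrightarrow> (\<forall>f\<in>PW. in_closed_span \<Lambda> f)"

definition kernels_minimal :: "complex set \<Rightarrow> bool" where
  "kernels_minimal \<Lambda> \<longleftrightarrow> (\<forall>l\<in>\<Lambda>. \<not> in_closed_span (\<Lambda> - {l}) (Kern l))"

definition kernels_exact :: "complex set \<Rightarrow> bool" where
  "kernels_exact \<Lambda> \<longleftrightarrow> kernels_complete \<Lambda> \<and> kernels_minimal \<Lambda>"

definition biorth :: "(complex \<Rightarrow> complex) \<Rightarrow> complex \<Rightarrow> complex \<Rightarrow> complex" where
  "biorth G l z = (if z = l then 1 else G z / (deriv G l * (z - l)))"

definition simple_zeros_exactly :: "(complex \<Rightarrow> complex) \<Rightarrow> complex set \<Rightarrow> bool" where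
  "simple_zeros_exactly G Z \<longleftrightarrow> {z. G z = 0} = Z \<and> (\<forall>z\<in>Z. deriv G z \<noteq> 0)"

definition generating_function :: "complex set \<Rightarrow> (complex \<Rightarrow> complex) \<Rightarrow> bool" where
  "generating_function \<Lambda> G \<longleftrightarrow>
     entire G \<and> exp_type_eq pi G \<and> simple_zeros_exactly G \<Lambda> \<and>
     (\<forall>l\<in>\<Lambda>. biorth G l \<in> PW) \<and>
     (\<forall>l\<in>\<Lambda>. \<forall>\<mu>\<in>\<Lambda>. pw_inner (biorth G l) (Kern \<mu>) = (if l = \<mu> then 1 else 0))"

text \<open>Entire function of genus at most 1 (zeros not at the origin):
  f(z) = exp(a + b z) * prod_n (1 - z/z_n) exp(z/z_n), sum |z_n|^(-2) < infinity,
  where z_n enumerates the zero set Z.\<close>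
definition genus_le_1 :: "(complex \<Rightarrow> complex) \<Rightarrow> complex set \<Rightarrow> bool" where
  "genus_le_1 f Z \<longleftrightarrow>
     (\<exists>a b (e :: nat \<Rightarrow> complex). bij_betw e UNIV Z \<and>
        summable (\<lambda>n. 1 / (norm (e n))\<^sup>2) \<and>
        (\<forall>z. (\<lambda>n. (1 - z / e n) * exp (z / e n)) has_prod (f z / exp (a + b * z))))"

definition blaschke_factor :: "complex \<Rightarrow> complex \<Rightarrow> complex" where
  "blaschke_factor w z = (z - w) / (z - cnj w)"

text \<open>Blaschke product in the upper half-plane (finite or infinite, with unimodular
  convergence factors / constant).\<close>
definition blaschke_product :: "(complex \<Rightarrow> complex) \<Rightarrow> bool" where
  "blaschke_product B \<longleftrightarrow>
     (\<exists>(w :: nat \<Rightarrow> complex) (\<epsilon> :: nat \<Rightarrow> complex) (N :: nat set).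
        (\<forall>n. norm (\<epsilon> n) = 1) \<and> (\<forall>n\<in>N. Im (w n) > 0) \<and>
        (\<forall>z. Im z > 0 \<longrightarrow>
           (\<lambda>n. \<epsilon> n * (if n \<in> N then blaschke_factor (w n) z else 1)) has_prod B z))"

definition star_fun :: "(complex \<Rightarrow> complex) \<Rightarrow> complex \<Rightarrow> complex" where
  "star_fun G z = cnj (G (cnj z))"

definition star_quot_blaschke :: "(complex \<Rightarrow> complex) \<Rightarrow> bool" where
  "star_quot_blaschke G \<longleftrightarrow>
     (\<exists>B1 B2. blaschke_product B1 \<and> blaschke_product B2 \<and>
        (\<forall>z. Im z > 0 \<and> G z \<noteq> 0 \<and> B2 z \<noteq> 0 \<longrightarrow> star_fun G z / G z = B1 z / B2 z))"

definition Sigma_pairs ::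
  "(complex \<Rightarrow> complex) \<Rightarrow> (complex \<Rightarrow> complex) \<Rightarrow> (complex \<Rightarrow> complex) \<Rightarrow>
   ((complex \<Rightarrow> complex) \<times> (complex \<Rightarrow> complex)) set" where
  "Sigma_pairs G G1 G2 = {(S1, S2). entire S1 \<and> entire S2 \<and>
     (\<exists>a :: int \<Rightarrow> complex.
        (\<lambda>n. (norm (a n))\<^sup>2) summable_on UNIV \<and> (\<forall>n. a n \<noteq> 0) \<and>
        (\<forall>z. z \<notin> \<int> \<longrightarrow>
           ((\<lambda>n. a n * G (of_int n) / (z - of_int n)) has_sum
              (G1 z * S1 z / sin (complex_of_real pi * z))) UNIV) \<and>
        (\<forall>z. z \<notin> \<int> \<longrightarrow>
           ((\<lambda>n. cnj (a n) * (-1) ^ nat \<bar>n\<bar> / (z - of_int n)) has_sum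
              (G2 z * S2 z / sin (complex_of_real pi * z))) UNIV))}"

end

theory Submission
  imports Defs
    "HOL-Complex_Analysis.Cauchy_Integral_Formula"
    "HOL-Probability.Sinc_Integral"
    "HOL-Library.Nat_Bijection"
begin

(* Write F = G1 * S1.  By definition of Sigma(Lambda1, Lambda2) the function
   F(z) / sin(pi z) is a Cauchy-type series  sum_n b_n / (z - n)  (b_n = a_n G(n)) converging
   unconditionally off the integers.  Subtracting the value of the series at z = i gives
     (F(z) - C sin(pi z)) / (i - z) = sum_n c_n sin(pi z) / (z - n),   c_n = b_n / (i - n),
   with C = F(i) / sin(pi i) and (c_n) absolutely summable.  The left-hand side W is entire
   (removable singularity at i), and an l^1-combination of the shifted kernels
   sin(pi z) / (z - n) lies in PW_pi: it has exponential type pi, and its restriction to R is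
   square integrable by Cauchy--Schwarz and the integrability of (sin(pi x) / x)^2.  Finally
     F(z) = i W(z) + z (pi C K_0(z) - W(z)),
   exhibiting F in PW_pi + z PW_pi. *)

section \<open>The entire function sinc and the reproducing kernels\<close>

lemma sin_eq_mult_sinc_c: "sin w = w * sinc_c w"
  unfolding sinc_c_def by (cases "w = 0") simp_all

text \<open>sinc is entire: it is the difference quotient of sin at 0, whose singularity is removable.\<close>
lemma entire_sinc_c: "entire sinc_c"
proof -
  have "(\<lambda>z. if z = 0 then deriv sin 0 else (sin z - sin 0) / (z - 0)) holomorphic_on (UNIV :: complex set)"
    by (rule pole_lemma) (auto intro: holomorphic_intros)
  moreover have "deriv sin (0::complex) = 1"
    using DERIV_sin[of "0::complex"] by (simp add: DERIV_imp_deriv)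
  then have "sinc_c = (\<lambda>z. if z = 0 then deriv sin 0 else (sin z - sin 0) / (z - 0))"
    unfolding sinc_c_def by auto
  ultimately show ?thesis
    unfolding entire_def by (simp only:)
qed

lemma entire_Kern: "entire (Kern l)"
proof -
  have "sinc_c holomorphic_on ((\<lambda>z. complex_of_real pi * (z - cnj l)) ` UNIV)"
    using entire_sinc_c unfolding entire_def by (rule holomorphic_on_subset) simp
  then have "(sinc_c \<circ> (\<lambda>z. complex_of_real pi * (z - cnj l))) holomorphic_on UNIV"
    by (rule holomorphic_on_compose[rotated]) (intro holomorphic_intros)
  then show ?thesis by (simp add: entire_def Kern_def[abs_def] o_def)
qed

text \<open>sin(pi z) = pi z K_0(z): this lets the final decomposition use K_0 in PW_pi.\<close>
lemma sin_pi_eq_Kern0: "sin (complex_of_real pi * z) = complex_of_real pi * z * Kern 0 z"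
  using sin_eq_mult_sinc_c[of "complex_of_real pi * z"] by (simp add: Kern_def)

lemma entire_imp_continuous: "entire f \<Longrightarrow> continuous_on UNIV f"
  unfolding entire_def using holomorphic_on_imp_continuous_on by blast

section \<open>Growth of the shifted sine kernels\<close>

lemma norm_sin_pi_shift:
  fixes z :: complex and m :: int
  shows "norm (sin (complex_of_real pi * z)) = norm (sin (complex_of_real pi * (z - of_int m)))"
proof -
  have s0: "sin (real_of_int m * pi) = 0" by (simp add: sin_times_pi_eq_0)
  have "cos (real_of_int m * pi) ^ 2 = 1"
    using sin_cos_squared_add[of "real_of_int m * pi"] s0 by simp
  then have c1: "\<bar>cos (real_of_int m * pi)\<bar> = 1"
    by (auto simp: power2_eq_1_iff)
  have "complex_of_real pi * (z - of_int m) = complex_of_real pi * z - complex_of_real (real_of_int m * pi)"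
    by (simp add: algebra_simps)
  then have "sin (complex_of_real pi * (z - of_int m))
      = sin (complex_of_real pi * z) * complex_of_real (cos (real_of_int m * pi))"
    by (simp add: sin_diff sin_int_times_real cos_int_times_real s0)
  then show ?thesis by (simp add: norm_mult c1)
qed

text \<open>Uniform bound |sin(pi z) / (z - m)| <= B e^(pi |Im z|): near the pole use the boundedness
  of sinc on a compact disc, away from it the estimate |sin w| <= e^|Im w|.\<close>
lemma sin_pi_kernel_bound:
  obtains B :: real where "B > 0"
    "\<And>z (m::int). norm (sin (complex_of_real pi * z) / (z - of_int m)) \<le> B * exp (pi * \<bar>Im z\<bar>)"
proof -
  have "compact (sinc_c ` cball 0 pi)"
    using entire_imp_continuous[OF entire_sinc_c]
    by (intro compact_continuous_image) (auto intro: continuous_on_subset)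
  then obtain M where M: "\<And>w. norm w \<le> pi \<Longrightarrow> norm (sinc_c w) \<le> M"
    using compact_imp_bounded bounded_iff by (metis image_eqI mem_cball_0)
  have M1: "1 \<le> M" using M[of 0] by (simp add: sinc_c_def)
  define B where "B = pi * M"
  have B1: "1 \<le> B" unfolding B_def using pi_gt3 M1 by (smt (verit) mult_le_cancel_left1)
  have centred: "norm (sin (complex_of_real pi * w) / w) \<le> B * exp (pi * \<bar>Im w\<bar>)" for w
  proof (cases "norm w \<le> 1")
    case True
    have "norm (sin (complex_of_real pi * w) / w) \<le> B"
    proof (cases "w = 0")
      case False
      have "sin (complex_of_real pi * w) / w = complex_of_real pi * sinc_c (complex_of_real pi * w)"
        using False sin_eq_mult_sinc_c[of "complex_of_real pi * w"] by simp
      moreover have "norm (sinc_c (complex_of_real pi * w)) \<le> M"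
        using True by (intro M) (simp add: norm_mult)
      ultimately show ?thesis unfolding B_def by (simp add: norm_mult)
    qed (use B1 in simp)
    also have "\<dots> \<le> B * exp (pi * \<bar>Im w\<bar>)" using B1 by simp
    finally show ?thesis .
  next
    case False
    have "norm (sin (complex_of_real pi * w) / w) = norm (sin (complex_of_real pi * w)) / norm w"
      by (rule norm_divide)
    also have "\<dots> \<le> norm (sin (complex_of_real pi * w))"
      using False by (simp add: divide_le_eq mult_le_cancel_left1)
    also have "\<dots> \<le> exp (pi * \<bar>Im w\<bar>)"
      using cmod_sin_le_exp[of 1 "complex_of_real pi * w"] by (simp add: abs_mult)
    also have "\<dots> \<le> B * exp (pi * \<bar>Im w\<bar>)" using B1 by simp
    finally show ?thesis .
  qed
  show ?thesis
  proof (rule that)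
    show "B > 0" using B1 by simp
    fix z and m :: int
    have "norm (sin (complex_of_real pi * z) / (z - of_int m))
        = norm (sin (complex_of_real pi * (z - of_int m)) / (z - of_int m))"
      by (simp only: norm_divide norm_sin_pi_shift[of z m])
    also have "\<dots> \<le> B * exp (pi * \<bar>Im (z - of_int m)\<bar>)" by (rule centred)
    finally show "norm (sin (complex_of_real pi * z) / (z - of_int m)) \<le> B * exp (pi * \<bar>Im z\<bar>)"
      by simp
  qed
qed

section \<open>Elementary closure properties of the Paley--Wiener space\<close>

lemma entire_measurable_on_real:
  assumes "entire f"
  shows "(\<lambda>x::real. f (complex_of_real x)) \<in> borel_measurable lborel"
proof -
  have "continuous_on UNIV (f \<circ> complex_of_real)"
    using entire_imp_continuous[OF assms]
    by (intro continuous_on_compose continuous_on_of_real continuous_on_id)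
       (auto intro: continuous_on_subset)
  then show ?thesis
    by (simp add: o_def borel_measurable_continuous_onI)
qed

lemma exp_type_le_pi_if_bound:
  assumes K: "K \<ge> 0" and bound: "\<And>z. norm (f z) \<le> K * exp (pi * \<bar>Im z\<bar>)"
  shows "exp_type_le pi f"
  unfolding exp_type_le_def
proof (intro allI impI exI[of _ K])
  fix \<epsilon> :: real and z assume "\<epsilon> > 0"
  then have "pi * \<bar>Im z\<bar> \<le> (pi + \<epsilon>) * norm z"
    using abs_Im_le_cmod[of z] by (intro mult_mono) auto
  then have "K * exp (pi * \<bar>Im z\<bar>) \<le> K * exp ((pi + \<epsilon>) * norm z)"
    using K by (intro mult_left_mono) auto
  then show "norm (f z) \<le> K * exp ((pi + \<epsilon>) * norm z)"
    using bound[of z] by linarith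
qed

lemma PW_cmult:
  assumes "f \<in> PW"
  shows "(\<lambda>z. c * f z) \<in> PW"
proof -
  have e: "entire f" "exp_type_le pi f"
    and i: "integrable lborel (\<lambda>x::real. (norm (f (complex_of_real x)))\<^sup>2)"
    using assms by (auto simp: PW_def)
  have "entire (\<lambda>z. c * f z)" using e unfolding entire_def by (auto intro: holomorphic_intros)
  moreover have "exp_type_le pi (\<lambda>z. c * f z)"
    unfolding exp_type_le_def
  proof (intro allI impI)
    fix \<epsilon> :: real assume "\<epsilon> > 0"
    then obtain C where C: "\<And>z. norm (f z) \<le> C * exp ((pi + \<epsilon>) * norm z)"
      using e(2) unfolding exp_type_le_def by blast
    show "\<exists>C. \<forall>z. norm (c * f z) \<le> C * exp ((pi + \<epsilon>) * norm z)"
      by (intro exI[of _ "norm c * C"] allI) (simp add: norm_mult mult.assoc mult_left_mono C)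
  qed
  moreover have "integrable lborel (\<lambda>x::real. (norm (c * f (complex_of_real x)))\<^sup>2)"
    using integrable_mult_left[OF i, of "(norm c)^2"] by (simp add: norm_mult power_mult_distrib)
  ultimately show ?thesis by (simp add: PW_def)
qed

lemma PW_diff:
  assumes "f \<in> PW" "g \<in> PW"
  shows "(\<lambda>z. f z - g z) \<in> PW"
proof -
  have f: "entire f" "exp_type_le pi f"
    and fi: "integrable lborel (\<lambda>x::real. (norm (f (complex_of_real x)))\<^sup>2)"
    and g: "entire g" "exp_type_le pi g"
    and gi: "integrable lborel (\<lambda>x::real. (norm (g (complex_of_real x)))\<^sup>2)"
    using assms by (auto simp: PW_def)
  have ent: "entire (\<lambda>z. f z - g z)" using f g unfolding entire_def by (auto intro: holomorphic_intros)
  moreover have "exp_type_le pi (\<lambda>z. f z - g z)"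
    unfolding exp_type_le_def
  proof (intro allI impI)
    fix \<epsilon> :: real assume "\<epsilon> > 0"
    then obtain C D where C: "\<And>z. norm (f z) \<le> C * exp ((pi + \<epsilon>) * norm z)"
      and D: "\<And>z. norm (g z) \<le> D * exp ((pi + \<epsilon>) * norm z)"
      using f(2) g(2) unfolding exp_type_le_def by meson
    show "\<exists>C. \<forall>z. norm (f z - g z) \<le> C * exp ((pi + \<epsilon>) * norm z)"
    proof (intro exI[of _ "C + D"] allI)
      fix z
      have "norm (f z - g z) \<le> norm (f z) + norm (g z)" by (rule norm_triangle_ineq4)
      also have "\<dots> \<le> (C + D) * exp ((pi + \<epsilon>) * norm z)"
        using add_mono[OF C D] by (simp add: distrib_right)
      finally show "norm (f z - g z) \<le> (C + D) * exp ((pi + \<epsilon>) * norm z)" .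
    qed
  qed
  moreover have "integrable lborel (\<lambda>x::real. (norm (f (complex_of_real x) - g (complex_of_real x)))\<^sup>2)"
  proof (rule Bochner_Integration.integrable_bound)
    show "integrable lborel (\<lambda>x::real. 2 * (norm (f (complex_of_real x)))\<^sup>2 + 2 * (norm (g (complex_of_real x)))\<^sup>2)"
      using fi gi by auto
    show "(\<lambda>x::real. (norm (f (complex_of_real x) - g (complex_of_real x)))\<^sup>2) \<in> borel_measurable lborel"
      using entire_measurable_on_real[OF ent] by measurable
    have "(norm (u - v))\<^sup>2 \<le> 2 * (norm u)\<^sup>2 + 2 * (norm v)\<^sup>2" for u v :: complex
    proof -
      have "(norm (u - v))\<^sup>2 \<le> (norm u + norm v)\<^sup>2"
        using norm_triangle_ineq4[of u v] by (intro power_mono) auto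
      also have "\<dots> \<le> 2 * (norm u)\<^sup>2 + 2 * (norm v)\<^sup>2"
        using zero_le_power2[of "norm u - norm v"] unfolding power2_sum power2_diff by linarith
      finally show ?thesis .
    qed
    then show "AE x in lborel. norm ((norm (f (complex_of_real x) - g (complex_of_real x)))\<^sup>2)
        \<le> norm (2 * (norm (f (complex_of_real x)))\<^sup>2 + 2 * (norm (g (complex_of_real x)))\<^sup>2)"
      by simp
  qed
  ultimately show ?thesis by (simp add: PW_def)
qed

section \<open>Series of shifted sine kernels with summable coefficients\<close>

text \<open>A continuous inequality valid off a countable set holds everywhere, because the
  complement of a countable set is dense in the plane.\<close>
lemma continuous_le_off_countable:
  fixes f g :: "complex \<Rightarrow> real"
  assumes "continuous_on UNIV f" "continuous_on UNIV g" "countable E"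
    and "\<And>z. z \<notin> E \<Longrightarrow> f z \<le> g z"
  shows "f z \<le> g z"
proof -
  have "z \<in> closure (- E)"
    unfolding closure_approachable
  proof (intro allI impI)
    fix e :: real assume "e > 0"
    then have "uncountable (ball z e)" by (rule uncountable_ball)
    then have "\<not> ball z e \<subseteq> E"
      by (metis countable_subset assms(3))
    then obtain y where "y \<in> ball z e" "y \<notin> E" by blast
    then show "\<exists>y\<in>- E. dist y z < e" by (auto simp: dist_commute)
  qed
  moreover have "closure (- E) \<subseteq> {z. f z \<le> g z}"
    using assms by (intro closure_minimal closed_Collect_le) auto
  ultimately show ?thesis by blast
qed

lemma sinc_series_growth:
  fixes H :: "complex \<Rightarrow> complex" and d :: "nat \<Rightarrow> complex" and m :: "nat \<Rightarrow> int"
  assumes ent: "entire H" and sd: "summable (\<lambda>k. norm (d k))" and E: "countable E"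
    and rep: "\<And>z. z \<notin> E \<Longrightarrow> (\<lambda>k. d k * (sin (complex_of_real pi * z) / (z - of_int (m k)))) sums H z"
  obtains K where "K \<ge> 0" "\<And>z. norm (H z) \<le> K * exp (pi * \<bar>Im z\<bar>)"
proof -
  obtain B where B: "B > 0"
    "\<And>z (m::int). norm (sin (complex_of_real pi * z) / (z - of_int m)) \<le> B * exp (pi * \<bar>Im z\<bar>)"
    using sin_pi_kernel_bound by blast
  define P where "P = (\<Sum>k. norm (d k))"
  have P: "P \<ge> 0" unfolding P_def using sd by (simp add: suminf_nonneg)
  have bound_off: "norm (H z) \<le> P * B * exp (pi * \<bar>Im z\<bar>)" if z: "z \<notin> E" for z
  proof -
    define t where "t = (\<lambda>k. d k * (sin (complex_of_real pi * z) / (z - of_int (m k))))"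
    have tb: "norm (t k) \<le> norm (d k) * (B * exp (pi * \<bar>Im z\<bar>))" for k
      unfolding t_def norm_mult by (intro mult_left_mono B(2)) auto
    have sb: "summable (\<lambda>k. norm (d k) * (B * exp (pi * \<bar>Im z\<bar>)))"
      using sd by (rule summable_mult2)
    have st: "summable (\<lambda>k. norm (t k))"
      by (rule summable_comparison_test'[OF sb]) (use tb in auto)
    have "norm (H z) = norm (\<Sum>k. t k)" using rep[OF z] unfolding t_def by (simp add: sums_iff)
    also have "\<dots> \<le> (\<Sum>k. norm (t k))" by (rule summable_norm[OF st])
    also have "\<dots> \<le> (\<Sum>k. norm (d k) * (B * exp (pi * \<bar>Im z\<bar>)))" by (rule suminf_le[OF tb st sb])
    also have "\<dots> = P * (B * exp (pi * \<bar>Im z\<bar>))"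
      unfolding P_def by (rule suminf_mult2[OF sd, symmetric])
    finally show ?thesis by (simp add: mult.assoc)
  qed
  show ?thesis
  proof (rule that)
    show "0 \<le> P * B" using P B by simp
    fix z
    show "norm (H z) \<le> P * B * exp (pi * \<bar>Im z\<bar>)"
    proof (rule continuous_le_off_countable[OF _ _ E bound_off])
      show "continuous_on UNIV (\<lambda>z. norm (H z))"
        using entire_imp_continuous[OF ent] by (rule continuous_on_norm)
      show "continuous_on UNIV (\<lambda>z. P * B * exp (pi * \<bar>Im z\<bar>))"
        by (intro continuous_intros)
    qed
  qed
qed

definition sinc_sq :: "real \<Rightarrow> real" where
  "sinc_sq y = (sin (pi * y) / y)^2"

lemma sinc_sq_nonneg: "0 \<le> sinc_sq y"
  by (simp add: sinc_sq_def)

lemma sin_pi_sq_le: "(sin (pi * y))^2 \<le> pi^2 * y^2"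
proof -
  have "\<bar>sin (pi * y)\<bar> \<le> \<bar>pi * y\<bar>" by (rule abs_sin_x_le_abs_x)
  then have "\<bar>sin (pi * y)\<bar>^2 \<le> \<bar>pi * y\<bar>^2" by (intro power_mono) auto
  then show ?thesis by (simp add: power_mult_distrib)
qed

lemma sinc_sq_le_pi_sq: "sinc_sq y \<le> pi^2"
proof (cases "y = 0")
  case False
  then have "y^2 > 0" by simp
  then show ?thesis using sin_pi_sq_le[of y] by (simp add: sinc_sq_def power_divide divide_le_eq)
qed (simp add: sinc_sq_def)

lemma sinc_sq_le: "sinc_sq y \<le> 2 * pi^2 * inverse (1 + y^2)"
proof (cases "y = 0")
  case True then show ?thesis by (simp add: sinc_sq_def)
next
  case False
  then have y2: "y^2 > 0" by simp
  have s1: "(sin (pi * y))^2 \<le> 1" by (simp add: abs_sin_le_one abs_square_le_1)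
  have p1: "1 \<le> pi^2" using pi_gt3 by (smt (verit) one_le_power)
  have "(sin (pi * y))^2 * (1 + y^2) = (sin (pi * y))^2 + (sin (pi * y))^2 * y^2"
    by (simp add: algebra_simps)
  also have "\<dots> \<le> pi^2 * y^2 + 1 * y^2"
    using sin_pi_sq_le[of y] mult_right_mono[OF s1, of "y^2"] by simp
  also have "\<dots> \<le> 2 * pi^2 * y^2"
    using mult_right_mono[OF p1, of "y^2"] by simp
  finally have "(sin (pi * y))^2 * (1 + y^2) \<le> 2 * pi^2 * y^2" .
  moreover have "1 + y^2 > 0" by (simp add: add_pos_nonneg)
  ultimately have c: "(sin (pi * y))^2 \<le> 2 * pi^2 * y^2 / (1 + y^2)"
    by (simp add: le_divide_eq)
  have "sinc_sq y = (sin (pi * y))^2 / y^2" by (simp add: sinc_sq_def power_divide)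
  also have "\<dots> \<le> (2 * pi^2 * y^2 / (1 + y^2)) / y^2"
    using c y2 by (intro divide_right_mono) auto
  also have "\<dots> = 2 * pi^2 * inverse (1 + y^2)" using False by (simp add: divide_inverse)
  finally show ?thesis .
qed

lemma sinc_sq_measurable[measurable]: "sinc_sq \<in> borel_measurable borel"
  unfolding sinc_sq_def by measurable

lemma sinc_sq_nn_integral_finite: "(\<integral>\<^sup>+y. ennreal (sinc_sq y) \<partial>lborel) < \<infinity>"
proof -
  have "integrable lborel (\<lambda>x::real. 2 * pi^2 * inverse (1 + x^2))"
    using integrable_inverse_1_plus_square by (simp add: set_integrable_def)
  then have "(\<integral>\<^sup>+x. ennreal (norm (2 * pi^2 * inverse (1 + x^2))) \<partial>lborel) < \<infinity>"
    by (rule conjunct2[OF iffD1[OF integrable_iff_bounded]])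
  moreover have "(\<integral>\<^sup>+y. ennreal (sinc_sq y) \<partial>lborel)
      \<le> (\<integral>\<^sup>+x. ennreal (norm (2 * pi^2 * inverse (1 + x^2))) \<partial>lborel)"
    using sinc_sq_le by (intro nn_integral_mono ennreal_leI) (simp add: add_pos_nonneg)
  ultimately show ?thesis by (meson le_less_trans)
qed

lemma sinc_sq_nn_integral_shift:
  "(\<integral>\<^sup>+x. ennreal (sinc_sq (x - c)) \<partial>lborel) = (\<integral>\<^sup>+y. ennreal (sinc_sq y) \<partial>lborel)"
  using nn_integral_real_affine[of "\<lambda>y. ennreal (sinc_sq y)" 1 "-c"] by simp

lemma norm_sin_pi_kernel_real:
  fixes x :: real and m :: int
  shows "(norm (sin (complex_of_real pi * complex_of_real x) / (complex_of_real x - of_int m)))^2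
      = sinc_sq (x - of_int m)"
proof -
  have "norm (sin (complex_of_real pi * complex_of_real x))
      = norm (sin (complex_of_real pi * (complex_of_real x - of_int m)))"
    by (rule norm_sin_pi_shift)
  also have "complex_of_real pi * (complex_of_real x - of_int m) = complex_of_real (pi * (x - of_int m))"
    by simp
  also have "norm (sin (complex_of_real (pi * (x - of_int m)))) = \<bar>sin (pi * (x - of_int m))\<bar>"
    by (simp only: sin_of_real norm_of_real)
  finally have num: "norm (sin (complex_of_real pi * complex_of_real x)) = \<bar>sin (pi * (x - of_int m))\<bar>" .
  have "complex_of_real x - of_int m = complex_of_real (x - of_int m)" by simp
  then have den: "norm (complex_of_real x - of_int m) = \<bar>x - of_int m\<bar>"
    by (simp only: norm_of_real)
  show ?thesis unfolding norm_divide num den sinc_sq_def by (simp add: power_divide)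
qed

lemma suminf_Cauchy_Schwarz:
  fixes p t :: "nat \<Rightarrow> real"
  assumes p: "\<And>k. 0 \<le> p k" and sp: "summable p" and s1: "summable (\<lambda>k. p k * t k)"
    and s2: "summable (\<lambda>k. p k * (t k)^2)"
  shows "(\<Sum>k. p k * t k)^2 \<le> (\<Sum>k. p k) * (\<Sum>k. p k * (t k)^2)"
proof -
  have partial: "(\<Sum>k<n. p k * t k)^2 \<le> (\<Sum>k<n. p k) * (\<Sum>k<n. p k * (t k)^2)" for n
  proof -
    have "(\<Sum>k<n. sqrt (p k) * (sqrt (p k) * t k))^2
        \<le> (\<Sum>k<n. (sqrt (p k))^2) * (\<Sum>k<n. (sqrt (p k) * t k)^2)"
      by (rule Cauchy_Schwarz_ineq_sum)
    then show ?thesis using p by (simp add: power_mult_distrib mult.assoc[symmetric])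
  qed
  have l1: "(\<lambda>n. (\<Sum>k<n. p k * t k)^2) \<longlonglongrightarrow> (\<Sum>k. p k * t k)^2"
    by (intro tendsto_power summable_LIMSEQ s1)
  have l2: "(\<lambda>n. (\<Sum>k<n. p k) * (\<Sum>k<n. p k * (t k)^2)) \<longlonglongrightarrow> (\<Sum>k. p k) * (\<Sum>k. p k * (t k)^2)"
    by (intro tendsto_mult summable_LIMSEQ sp s2)
  show ?thesis using partial by (intro LIMSEQ_le[OF l1 l2]) auto
qed

lemma summable_weighted_sinc_sq:
  assumes "summable (\<lambda>k. norm (d k))"
  shows "summable (\<lambda>k. norm (d k) * sinc_sq (x - of_int (m k)))"
proof (rule summable_comparison_test'[OF summable_mult2[OF assms, of "pi^2"]])
  fix k
  show "norm (norm (d k) * sinc_sq (x - of_int (m k))) \<le> norm (d k) * pi^2"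
    using mult_left_mono[OF sinc_sq_le_pi_sq norm_ge_zero] by (simp add: sinc_sq_nonneg)
qed

lemma sinc_series_square_bound:
  fixes H :: "complex \<Rightarrow> complex" and d :: "nat \<Rightarrow> complex" and m :: "nat \<Rightarrow> int" and x :: real
  assumes sd: "summable (\<lambda>k. norm (d k))"
    and rep: "(\<lambda>k. d k * (sin (complex_of_real pi * x) / (complex_of_real x - of_int (m k))))
      sums H x"
  shows "(norm (H x))^2 \<le> (\<Sum>k. norm (d k)) * (\<Sum>k. norm (d k) * sinc_sq (x - of_int (m k)))"
proof -
  define t where "t = (\<lambda>k. norm (sin (complex_of_real pi * x) / (complex_of_real x - of_int (m k))))"
  have t2: "(t k)^2 = sinc_sq (x - of_int (m k))" for k
    unfolding t_def by (rule norm_sin_pi_kernel_real)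
  have t_le: "t k \<le> pi" for k
    using sinc_sq_le_pi_sq[of "x - of_int (m k)"] unfolding t2[symmetric]
    by (rule power2_le_imp_le) simp
  have t0: "0 \<le> t k" for k
    unfolding t_def by (rule norm_ge_zero)
  have s1: "summable (\<lambda>k. norm (d k) * t k)"
  proof (rule summable_comparison_test'[OF summable_mult2[OF sd, of pi]])
    fix k
    show "norm (norm (d k) * t k) \<le> norm (d k) * pi"
      using mult_left_mono[OF t_le[of k] norm_ge_zero[of "d k"]] t0[of k] by simp
  qed
  define f where
    "f = (\<lambda>k. d k * (sin (complex_of_real pi * x) / (complex_of_real x - of_int (m k))))"
  have nf: "norm (f k) = norm (d k) * t k" for k
    unfolding f_def t_def by (rule norm_mult)
  have "norm (H x) = norm (suminf f)"
    using rep unfolding f_def by (simp add: sums_iff)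
  also have "\<dots> \<le> (\<Sum>k. norm (d k) * t k)"
    using summable_norm[of f] s1 by (simp add: nf)
  finally have "(norm (H x))^2 \<le> (\<Sum>k. norm (d k) * t k)^2"
    by (intro power_mono) auto
  also have "\<dots> \<le> (\<Sum>k. norm (d k)) * (\<Sum>k. norm (d k) * (t k)^2)"
  proof (rule suminf_Cauchy_Schwarz)
    show "summable (\<lambda>k. norm (d k) * (t k)^2)"
      unfolding t2 by (rule summable_weighted_sinc_sq[OF sd])
  qed (use sd s1 in auto)
  finally show ?thesis
    unfolding t2 .
qed

lemma nn_integral_weighted_sinc_sq:
  fixes p :: "nat \<Rightarrow> real" and m :: "nat \<Rightarrow> int"
  assumes p: "\<And>k. 0 \<le> p k" "summable p"
  shows "(\<integral>\<^sup>+x. (\<Sum>k. ennreal (p k * sinc_sq (x - of_int (m k)))) \<partial>lborel)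
    = ennreal (\<Sum>k. p k) * (\<integral>\<^sup>+y. ennreal (sinc_sq y) \<partial>lborel)"
proof -
  have "(\<integral>\<^sup>+x. (\<Sum>k. ennreal (p k * sinc_sq (x - of_int (m k)))) \<partial>lborel)
      = (\<Sum>k. (\<integral>\<^sup>+x. ennreal (p k * sinc_sq (x - of_int (m k))) \<partial>lborel))"
    by (rule nn_integral_suminf) measurable
  also have "\<dots> = (\<Sum>k. ennreal (p k) * (\<integral>\<^sup>+y. ennreal (sinc_sq y) \<partial>lborel))"
  proof (rule suminf_cong)
    fix k
    have "(\<integral>\<^sup>+x. ennreal (p k * sinc_sq (x - of_int (m k))) \<partial>lborel)
        = (\<integral>\<^sup>+x. ennreal (p k) * ennreal (sinc_sq (x - of_int (m k))) \<partial>lborel)"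
      by (intro nn_integral_cong) (rule ennreal_mult[OF p(1) sinc_sq_nonneg])
    also have "\<dots> = ennreal (p k) * (\<integral>\<^sup>+x. ennreal (sinc_sq (x - of_int (m k))) \<partial>lborel)"
      by (rule nn_integral_cmult) measurable
    finally show "(\<integral>\<^sup>+x. ennreal (p k * sinc_sq (x - of_int (m k))) \<partial>lborel)
        = ennreal (p k) * (\<integral>\<^sup>+y. ennreal (sinc_sq y) \<partial>lborel)"
      by (simp only: sinc_sq_nn_integral_shift)
  qed
  also have "\<dots> = ennreal (\<Sum>k. p k) * (\<integral>\<^sup>+y. ennreal (sinc_sq y) \<partial>lborel)"
    using suminf_ennreal2[OF p] by simp
  finally show ?thesis .
qed

text \<open>Integrating the pointwise bound termwise (the kernels sinc_sq(x - m) all have the same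
  finite integral) shows that the series is square integrable on R.\<close>
lemma sinc_series_square_integrable:
  fixes H :: "complex \<Rightarrow> complex" and d :: "nat \<Rightarrow> complex" and m :: "nat \<Rightarrow> int"
  assumes ent: "entire H" and sd: "summable (\<lambda>k. norm (d k))" and E: "countable E"
    and rep: "\<And>z. z \<notin> E \<Longrightarrow> (\<lambda>k. d k * (sin (complex_of_real pi * z) / (z - of_int (m k)))) sums H z"
  shows "integrable lborel (\<lambda>x::real. (norm (H (complex_of_real x)))\<^sup>2)"
proof -
  define p where "p = (\<lambda>k. norm (d k))"
  define P where "P = (\<Sum>k. p k)"
  define I where "I = (\<integral>\<^sup>+y. ennreal (sinc_sq y) \<partial>lborel)"
  have p: "\<And>k. 0 \<le> p k" "summable p" unfolding p_def using sd by auto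
  have P: "0 \<le> P" unfolding P_def using p by (simp add: suminf_nonneg)
  have "{x::real. complex_of_real x \<in> E} \<subseteq> Re ` E"
    by (auto intro: rev_image_eqI)
  then have "countable {x::real. complex_of_real x \<in> E}"
    by (rule countable_subset) (rule countable_image[OF E])
  then have "AE x in lborel. x \<notin> {x::real. complex_of_real x \<in> E}"
    by (intro AE_not_in countable_imp_null_set_lborel)
  then have ae: "AE x in lborel. complex_of_real x \<notin> E"
    by simp
  have "(\<integral>\<^sup>+x. ennreal (norm ((norm (H (complex_of_real x)))\<^sup>2)) \<partial>lborel)
      \<le> (\<integral>\<^sup>+x. ennreal P * (\<Sum>k. ennreal (p k * sinc_sq (x - of_int (m k)))) \<partial>lborel)"
  proof (rule nn_integral_mono_AE)
    show "AE x in lborel. ennreal (norm ((norm (H (complex_of_real x)))\<^sup>2))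
        \<le> ennreal P * (\<Sum>k. ennreal (p k * sinc_sq (x - of_int (m k))))"
      using ae
    proof eventually_elim
      case (elim x)
      have s: "summable (\<lambda>k. p k * sinc_sq (x - of_int (m k)))"
        unfolding p_def by (rule summable_weighted_sinc_sq[OF sd])
      have "ennreal (norm ((norm (H (complex_of_real x)))\<^sup>2))
          \<le> ennreal (P * (\<Sum>k. p k * sinc_sq (x - of_int (m k))))"
        using sinc_series_square_bound[where d = d and m = m and H = H and x = x, OF sd rep[OF elim]]
        unfolding P_def p_def
        by (intro ennreal_leI) simp
      also have "\<dots> = ennreal P * ennreal (\<Sum>k. p k * sinc_sq (x - of_int (m k)))"
        using s p(1) sinc_sq_nonneg by (intro ennreal_mult[OF P] suminf_nonneg) auto
      also have "ennreal (\<Sum>k. p k * sinc_sq (x - of_int (m k)))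
          = (\<Sum>k. ennreal (p k * sinc_sq (x - of_int (m k))))"
        using s p(1) sinc_sq_nonneg by (intro suminf_ennreal2[symmetric]) auto
      finally show ?case .
    qed
  qed
  also have "\<dots> = ennreal P * (\<integral>\<^sup>+x. (\<Sum>k. ennreal (p k * sinc_sq (x - of_int (m k)))) \<partial>lborel)"
    by (rule nn_integral_cmult) measurable
  also have "\<dots> = ennreal P * (ennreal P * I)"
    unfolding P_def I_def by (simp only: nn_integral_weighted_sinc_sq[OF p])
  finally have "(\<integral>\<^sup>+x. ennreal (norm ((norm (H (complex_of_real x)))\<^sup>2)) \<partial>lborel) < \<infinity>"
    using sinc_sq_nn_integral_finite unfolding I_def[symmetric]
    by (simp add: ennreal_mult_less_top le_less_trans)
  moreover have "(\<lambda>x::real. (norm (H (complex_of_real x)))\<^sup>2) \<in> borel_measurable lborel"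
    using entire_measurable_on_real[OF ent] by measurable
  ultimately show ?thesis by (simp add: integrable_iff_bounded)
qed

lemma sinc_series_in_PW:
  fixes H :: "complex \<Rightarrow> complex" and c :: "int \<Rightarrow> complex"
  assumes ent: "entire H" and sc: "c summable_on UNIV" and E: "countable E"
    and rep: "\<And>z. z \<notin> E \<Longrightarrow>
      ((\<lambda>n. c n * (sin (complex_of_real pi * z) / (z - of_int n))) has_sum H z) UNIV"
  shows "H \<in> PW"
proof -
  have bij: "bij_betw int_decode UNIV UNIV"
    using bij_int_decode by (simp add: bij_def bij_betw_def)
  have "(\<lambda>n. norm (c n)) summable_on UNIV"
    using sc summable_on_iff_abs_summable_on_complex by blast
  then have sd: "summable (\<lambda>k. norm (c (int_decode k)))"
    using summable_on_reindex_bij_betw[OF bij, of "\<lambda>n. norm (c n)"]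
    by (auto intro: summable_on_imp_summable)
  have rep': "(\<lambda>k. c (int_decode k) * (sin (complex_of_real pi * z) / (z - of_int (int_decode k))))
      sums H z" if "z \<notin> E" for z
    by (rule has_sum_imp_sums[OF iffD2[OF has_sum_reindex_bij_betw[OF bij,
          of "\<lambda>n. c n * (sin (complex_of_real pi * z) / (z - of_int n))"] rep[OF that]]])
  obtain K where "K \<ge> 0" "\<And>z. norm (H z) \<le> K * exp (pi * \<bar>Im z\<bar>)"
    using sinc_series_growth[OF ent sd E rep'] by blast
  then have "exp_type_le pi H" by (rule exp_type_le_pi_if_bound)
  moreover have "integrable lborel (\<lambda>x::real. (norm (H (complex_of_real x)))\<^sup>2)"
    by (rule sinc_series_square_integrable[OF ent sd E rep'])
  ultimately show ?thesis using ent by (simp add: PW_def)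
qed

lemma Kern0_in_PW: "Kern 0 \<in> PW"
proof (rule sinc_series_in_PW[OF entire_Kern _ countable_int])
  show "(\<lambda>n::int. if n = 0 then 1 / complex_of_real pi else 0) summable_on UNIV"
    by (rule summable_on_cong_neutral[of _ "{0}", THEN iffD1]) auto
  fix z :: complex assume "z \<notin> \<int>"
  then have "z \<noteq> 0" by auto
  then have eq: "Kern 0 z = 1 / complex_of_real pi * (sin (complex_of_real pi * z) / (z - of_int 0))"
    using sin_pi_eq_Kern0[of z] by (simp add: field_simps)
  let ?t = "\<lambda>n::int. (if n = 0 then 1 / complex_of_real pi else 0) *
      (sin (complex_of_real pi * z) / (z - of_int n))"
  have "(?t has_sum Kern 0 z) {0}"
    by (rule has_sum_finiteI) (use eq in simp_all)
  moreover have "(?t has_sum Kern 0 z) UNIV \<longleftrightarrow> (?t has_sum Kern 0 z) {0}"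
    by (rule has_sum_cong_neutral) auto
  ultimately show "(?t has_sum Kern 0 z) UNIV" by blast
qed

section \<open>Entire functions whose quotient by sin(pi z) is a Cauchy series\<close>

lemma cauchy_series_resolvent:
  fixes b :: "int \<Rightarrow> complex"
  assumes s: "((\<lambda>n. b n / (z - of_int n)) has_sum s) UNIV"
    and t: "((\<lambda>n. b n / (w - of_int n)) has_sum t) UNIV"
    and z: "z \<notin> \<int>" and w: "w \<notin> \<int>" and zw: "z \<noteq> w"
  shows "((\<lambda>n. b n / (w - of_int n) / (z - of_int n)) has_sum ((s - t) / (w - z))) UNIV"
proof -
  have "b n / (w - of_int n) / (z - of_int n) = (b n / (z - of_int n) - b n / (w - of_int n)) / (w - z)" for n
  proof -
    have nz: "z - of_int n \<noteq> 0" "w - of_int n \<noteq> 0" "w - z \<noteq> 0"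
      using z w zw by (auto simp: Ints_of_int)
    have "b n / (z - of_int n) - b n / (w - of_int n) = b n * (w - z) / ((z - of_int n) * (w - of_int n))"
      using nz by (simp add: divide_simps) (simp add: algebra_simps)
    then show ?thesis using nz by (simp add: divide_simps)
  qed
  then show ?thesis
    using has_sum_divide_const[OF has_sum_add[OF s has_sum_uminusI[OF t]], of "w - z"]
    by simp
qed

lemma entire_divide_root:
  assumes f: "entire f" and a: "f a = 0"
  shows "entire (\<lambda>z. if z = a then - deriv f a else f z / (a - z))"
proof -
  have holo: "(\<lambda>z. if z = a then deriv f a else (f z - f a) / (z - a)) holomorphic_on UNIV"
    using f unfolding entire_def by (intro pole_lemma) auto
  have "(\<lambda>z. if z = a then - deriv f a else f z / (a - z))
      = (\<lambda>z. - (if z = a then deriv f a else (f z - f a) / (z - a)))"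
  proof
    fix z
    have "f z / (a - z) = - (f z / (z - a))"
      by (metis divide_minus_right minus_diff_eq)
    then show "(if z = a then - deriv f a else f z / (a - z))
        = - (if z = a then deriv f a else (f z - f a) / (z - a))"
      by (simp add: a)
  qed
  then show ?thesis
    unfolding entire_def using holomorphic_on_minus[OF holo] by simp
qed

text \<open>With C = F(i) / sin(pi i),
  W(z) = (F(z) - C sin(pi z)) / (i - z) is entire and is an l^1 sinc series, and
  F = i W + z (pi C K_0 - W).\<close>
lemma entire_over_sine_cauchy_series:
  fixes F :: "complex \<Rightarrow> complex" and b :: "int \<Rightarrow> complex"
  assumes eF: "entire F"
    and ser: "\<And>z. z \<notin> \<int> \<Longrightarrow> ((\<lambda>n. b n / (z - of_int n)) has_sum (F z / sin (complex_of_real pi * z))) UNIV"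
  shows "F \<in> PW_plus_zPW"
proof -
  define sn where "sn = (\<lambda>z. sin (complex_of_real pi * z))"
  have ii: "\<i> \<notin> \<int>"
  proof
    assume "\<i> \<in> \<int>"
    then obtain n :: int where "\<i> = of_int n" by (rule Ints_cases)
    then have "Im \<i> = Im (of_int n)" by (rule arg_cong)
    then show False by simp
  qed
  have sn_nz: "sn z \<noteq> 0" if "z \<notin> \<int>" for z
    using that unfolding sn_def by (auto simp: sin_eq_0)
  define c where "c = (\<lambda>n. b n / (\<i> - of_int n))"
  define C where "C = F \<i> / sn \<i>"
  define f where "f = (\<lambda>z. F z - C * sn z)"
  define W where "W = (\<lambda>z. if z = \<i> then - deriv f \<i> else f z / (\<i> - z))"
  have hc: "(c has_sum C) UNIV" using ser[OF ii] unfolding c_def C_def sn_def .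
  have f_i: "f \<i> = 0" using sn_nz[OF ii] unfolding f_def C_def by simp
  have "entire f"
    using eF unfolding f_def sn_def entire_def by (auto intro!: holomorphic_intros)
  then have eW: "entire W"
    unfolding W_def using f_i by (rule entire_divide_root)
  have "((\<lambda>n. c n * (sn z / (z - of_int n))) has_sum W z) UNIV" if "z \<notin> insert \<i> \<int>" for z
  proof -
    have z: "z \<notin> \<int>" "z \<noteq> \<i>" using that by auto
    have "((\<lambda>n. c n / (z - of_int n)) has_sum ((F z / sn z - C) / (\<i> - z))) UNIV"
      unfolding c_def C_def sn_def by (rule cauchy_series_resolvent[OF ser[OF z(1)] ser[OF ii] z(1) ii z(2)])
    then have "((\<lambda>n. sn z * (c n / (z - of_int n))) has_sum (sn z * ((F z / sn z - C) / (\<i> - z)))) UNIV"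
      by (rule has_sum_cmult_right)
    moreover have "sn z * ((F z / sn z - C) / (\<i> - z)) = W z"
    proof -
      have "sn z * ((F z / sn z - C) / (\<i> - z)) = sn z * (F z / sn z - C) / (\<i> - z)"
        by (rule times_divide_eq_right)
      also have "sn z * (F z / sn z - C) = f z"
        using sn_nz[OF z(1)] by (simp add: f_def right_diff_distrib mult.commute)
      finally show ?thesis using z(2) by (simp add: W_def)
    qed
    ultimately show ?thesis by (simp add: mult.commute mult.left_commute)
  qed
  then have W_PW: "W \<in> PW"
    using hc countable_int by (intro sinc_series_in_PW[OF eW, of c "insert \<i> \<int>"])
      (auto simp: summable_on_def sn_def)
  have "F z = \<i> * W z + z * (complex_of_real pi * C * Kern 0 z - W z)" for z
  proof -
    have "F z = C * sn z + (\<i> - z) * W z"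
      using f_i by (cases "z = \<i>") (auto simp: W_def f_def)
    then show ?thesis
      unfolding sn_def sin_pi_eq_Kern0 by (simp add: algebra_simps)
  qed
  moreover have "(\<lambda>z. \<i> * W z) \<in> PW" "(\<lambda>z. complex_of_real pi * C * Kern 0 z - W z) \<in> PW"
    using W_PW Kern0_in_PW by (auto intro: PW_cmult PW_diff)
  ultimately show ?thesis unfolding PW_plus_zPW_def by blast
qed

theorem lemma2p1:
  fixes \<Lambda> \<Lambda>1 \<Lambda>2 :: "complex set"
    and G G1 G2 S1 S2 :: "complex \<Rightarrow> complex"
  assumes "\<Lambda> \<inter> \<int> = {}"
    and "kernels_exact \<Lambda>"
    and "generating_function \<Lambda> G"
    and "\<Lambda> = \<Lambda>1 \<union> \<Lambda>2" and "\<Lambda>1 \<inter> \<Lambda>2 = {}"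
    and "infinite \<Lambda>1" and "infinite \<Lambda>2"
    and "entire G2" and "genus_le_1 G2 \<Lambda>2" and "simple_zeros_exactly G2 \<Lambda>2"
    and "star_quot_blaschke G2"
    and "entire G1" and "\<And>z. G z = G1 z * G2 z"
    and "(S1, S2) \<in> Sigma_pairs G G1 G2"
  shows "(\<lambda>z. G1 z * S1 z) \<in> PW_plus_zPW"
proof -
  obtain a :: "int \<Rightarrow> complex" where "entire S1"
    and ser: "\<And>z. z \<notin> \<int> \<Longrightarrow> ((\<lambda>n. a n * G (of_int n) / (z - of_int n)) has_sum
        (G1 z * S1 z / sin (complex_of_real pi * z))) UNIV"
    using \<open>(S1, S2) \<in> Sigma_pairs G G1 G2\<close> unfolding Sigma_pairs_def by blast
  then have "entire (\<lambda>z. G1 z * S1 z)"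
    using \<open>entire G1\<close> unfolding entire_def by (auto intro: holomorphic_intros)
  then show ?thesis
    using ser by (rule entire_over_sine_cauchy_series)
qed

end
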